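(* For all $k,m\in\mathbf N$, $$\sum_{i=1}^{k-1}(-1)^{k-1-i}\sum_{d\mid m}\alpha_i(d)=\alpha_k(m)+(-1)^k\alpha_1(m).$$
   Context: For $k,m\in\mathbf N=\{1,2,\dots\}$, $\alpha_k(m)$ is the number of $k$-tuples $(m_1,\dots,m_k)$ of integers $m_i\ge2$ with $m_1m_2\cdots m_k=m$. The inner sum is over positive divisors $d$ of $m$. *)

theory Defs
  imports Main
begin

definition alpha :: "nat \<Rightarrow> nat \<Rightarrow> nat" where
  "alpha k m = card {xs :: nat list. length xs = k \<and> (\<forall>x\<in>set xs. 2 \<le> x) \<and> prod_list xs = m}"

end

theory Submission
  imports Defs
begin

text \<open>Removing the first factor of a factorization of m into k + 1 factors, each at least 2,
  leaves a factorization of a proper divisor d of m into k factors, and the first factor is m div d.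
  Hence alpha (k + 1) m is the sum of alpha k d over the proper divisors d of m, so the sum of
  alpha i d over all divisors d of m equals alpha i m + alpha (i + 1) m, and the alternating sum
  telescopes.\<close>

definition factorizations :: "nat \<Rightarrow> nat \<Rightarrow> nat list set" where
  "factorizations k m = {xs. length xs = k \<and> (\<forall>x\<in>set xs. 2 \<le> x) \<and> prod_list xs = m}"

lemma alpha_eq_card_factorizations: "alpha k m = card (factorizations k m)"
  by (simp add: alpha_def factorizations_def)

lemma finite_factorizations:
  assumes "m > 0"
  shows "finite (factorizations k m)"
proof (rule finite_subset)
  show "factorizations k m \<subseteq> {xs. set xs \<subseteq> {..m} \<and> length xs = k}"
    using assms by (auto simp: factorizations_def dest: prod_list_dvd dvd_imp_le)
  show "finite {xs. set xs \<subseteq> {..m} \<and> length xs = k}"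
    by (rule finite_lists_length_eq) simp
qed

lemma factorizations_Suc:
  assumes "m > 0"
  shows "factorizations (Suc k) m
           = (\<Union>d\<in>{d. d dvd m \<and> d < m}. (#) (m div d) ` factorizations k d)"
proof (intro set_eqI iffI)
  fix xs assume "xs \<in> factorizations (Suc k) m"
  then obtain x ys where xs: "xs = x # ys" and "2 \<le> x" and ys: "ys \<in> factorizations k (prod_list ys)"
    and "m = x * prod_list ys"
    by (cases xs) (auto simp: factorizations_def)
  then have "prod_list ys dvd m" and "prod_list ys < m" and "m div prod_list ys = x"
    using assms by auto
  with xs ys show "xs \<in> (\<Union>d\<in>{d. d dvd m \<and> d < m}. (#) (m div d) ` factorizations k d)"
    by blast
next
  fix xs assume "xs \<in> (\<Union>d\<in>{d. d dvd m \<and> d < m}. (#) (m div d) ` factorizations k d)"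
  then obtain d ys where "d dvd m" "d < m" "ys \<in> factorizations k d" and xs: "xs = m div d # ys"
    by blast
  moreover from \<open>d dvd m\<close> obtain q where "m = d * q"
    by blast
  with \<open>d < m\<close> assms have "2 \<le> q"
    by (cases "q \<le> 1") (auto simp: le_Suc_eq)
  ultimately show "xs \<in> factorizations (Suc k) m"
    by (auto simp: factorizations_def)
qed

lemma div_div_self_nat:
  fixes m :: nat
  assumes "m > 0" and "d dvd m"
  shows "m div (m div d) = d"
  using assms by auto

lemma alpha_Suc_eq_sum_proper_divisors:
  assumes "m > 0"
  shows "alpha (Suc k) m = (\<Sum>d | d dvd m \<and> d < m. alpha k d)"
proof -
  let ?P = "{d. d dvd m \<and> d < m}"
  have "finite ?P"
    using assms by simp
  moreover have "\<forall>d\<in>?P. finite ((#) (m div d) ` factorizations k d)"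
    using assms by (auto intro!: finite_factorizations Nat.gr0I)
  moreover have "\<forall>d\<in>?P. \<forall>e\<in>?P. d \<noteq> e \<longrightarrow>
      (#) (m div d) ` factorizations k d \<inter> (#) (m div e) ` factorizations k e = {}"
    using div_div_self_nat[OF assms] by (fastforce simp del: div_div_self_nat)
  ultimately have "card (\<Union>d\<in>?P. (#) (m div d) ` factorizations k d)
      = (\<Sum>d\<in>?P. card ((#) (m div d) ` factorizations k d))"
    by (rule card_UN_disjoint)
  then show ?thesis
    by (simp add: alpha_eq_card_factorizations factorizations_Suc[OF assms] card_image)
qed

lemma sum_divisors_alpha:
  assumes "m > 0"
  shows "(\<Sum>d | d dvd m. alpha k d) = alpha k m + alpha (Suc k) m"
proof -
  have "{d. d dvd m} = insert m {d. d dvd m \<and> d < m}"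
    using assms by (auto dest: dvd_imp_le)
  then show ?thesis
    using assms by (simp add: alpha_Suc_eq_sum_proper_divisors)
qed

lemma alternating_sum_consecutive_telescope:
  fixes g :: "nat \<Rightarrow> 'a :: comm_ring_1"
  shows "(\<Sum>i=1..n. (-1) ^ (n - i) * (g i + g (Suc i))) = g (Suc n) + (-1) ^ Suc n * g 1"
proof (induction n)
  case 0
  then show ?case by simp
next
  case (Suc n)
  have "(\<Sum>i=1..n. (-1) ^ (Suc n - i) * (g i + g (Suc i)))
      = - (\<Sum>i=1..n. (-1) ^ (n - i) * (g i + g (Suc i)))"
    by (subst sum_negf[symmetric], rule sum.cong) (auto simp: Suc_diff_le)
  with Suc.IH show ?case
    by (simp add: algebra_simps)
qed

theorem lemma4p2:
  fixes k m :: nat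
  assumes "1 \<le> k" and "1 \<le> m"
  shows "(\<Sum>i=1..k-1. (-1::int) ^ (k - 1 - i) * (\<Sum>d | d dvd m. int (alpha i d)))
         = int (alpha k m) + (-1) ^ k * int (alpha 1 m)"
proof -
  obtain n where k: "k = Suc n"
    using assms(1) by (cases k) auto
  have "(\<Sum>d | d dvd m. int (alpha i d)) = int (alpha i m) + int (alpha (Suc i) m)" for i
    using sum_divisors_alpha[of m i] assms(2) by (simp flip: of_nat_sum)
  then show ?thesis
    using alternating_sum_consecutive_telescope[of n "\<lambda>i. int (alpha i m)"] by (simp add: k)
qed

end
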